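(* Let $H$ be a real or complex Hilbert space of dimension $n$, let $N\ge n$, let $F=\{f_i\}_{i=1}^N$ be a frame for $H$ and let $G=\{g_i\}_{i=1}^N$ be a dual frame of $F$. Let $\{q_i\}_{i=1}^N$ be the weight number sequence defined below. Then $$\mathcal{R}_1^p(F,G)=\max\{\,q_i\,|\langle f_i,g_i\rangle| : 1\le i\le N\,\}.$$
   Context: Inner products are linear in the first argument. A frame for the $n$-dimensional space $H$ is a finite sequence spanning $H$. Its analysis operator is $\Theta_F f=(\langle f,f_i\rangle)_{i=1}^N$ and its synthesis operator is $\Theta_F^*(c)=\sum_i c_if_i$. A dual frame of $F$ is a frame $G=\{g_i\}_{i=1}^N$ with $f=\sum_i\langle f,f_i\rangle g_i=\sum_i\langle f,g_i\rangle f_i$ for all $f\in H$. A probability sequence $\{p_i\}_{i=1}^N$ satisfies $0\le p_i\le 1$ and $\sum_i p_i=1$. The weight numbers are $q_i=\frac{\sum_{j=1}^N p_j}{\sum_{j=1}^N p_j-p_i}\cdot\frac{N-1}{n}$ (assumed well defined). For $1\le m\le N$, $\mathcal{D}_m^p$ is the set of $N\times N$ diagonal matrices $D$ for which there is $\Lambda\subseteq\{1,\dots,N\}$ with $|\Lambda|=m$, $D_{ii}=q_i$ for $i\in\Lambda$ and $D_{ii}=0$ otherwise. Thus $\Theta_G^*D\Theta_F f=\sum_{i\in\Lambda}q_i\langle f,f_i\rangle g_i$. Finally $\mathcal{R}_m^p(F,G)=\max\{\rho(\Theta_G^*D\Theta_F): D\in\mathcal{D}_m^p\}$, where $\rho$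 denotes spectral radius. *)

theory Defs
  imports "Jordan_Normal_Form.Spectral_Radius"
begin

text \<open>Finite-dimensional Hilbert space of dimension n is modelled as the coordinate space
  'a^n (JNF vectors in carrier_vec n) over 'a = real or complex, with the standard inner
  product <x,y> = x \<bullet>c y (linear in the first argument, conjugate-linear in the second).
  Sequences are indexed by i < N (0-based).\<close>

definition synthesis_op :: "nat \<Rightarrow> nat \<Rightarrow> (nat \<Rightarrow> 'a::conjugatable_field vec) \<Rightarrow> 'a mat" where
  "synthesis_op n N f = mat n N (\<lambda>(r, i). f i $ r)"

definition analysis_op :: "nat \<Rightarrow> nat \<Rightarrow> (nat \<Rightarrow> 'a::conjugatable_field vec) \<Rightarrow> 'a mat" where
  "analysis_op n N f = mat N n (\<lambda>(i, r). conjugate (f i $ r))"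

definition is_frame :: "nat \<Rightarrow> nat \<Rightarrow> (nat \<Rightarrow> 'a::conjugatable_field vec) \<Rightarrow> bool" where
  "is_frame n N f \<longleftrightarrow> (\<forall>i<N. f i \<in> carrier_vec n) \<and>
     (\<forall>x \<in> carrier_vec n. \<exists>c \<in> carrier_vec N. x = synthesis_op n N f *\<^sub>v c)"

definition is_dual_frame :: "nat \<Rightarrow> nat \<Rightarrow> (nat \<Rightarrow> 'a::conjugatable_field vec) \<Rightarrow> (nat \<Rightarrow> 'a vec) \<Rightarrow> bool" where
  "is_dual_frame n N f g \<longleftrightarrow> is_frame n N g \<and>
     (\<forall>x \<in> carrier_vec n.
        x = synthesis_op n N g *\<^sub>v (analysis_op n N f *\<^sub>v x) \<and>
        x = synthesis_op n N f *\<^sub>v (analysis_op n N g *\<^sub>v x))"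

definition is_prob_seq :: "nat \<Rightarrow> (nat \<Rightarrow> real) \<Rightarrow> bool" where
  "is_prob_seq N p \<longleftrightarrow> (\<forall>i<N. 0 \<le> p i \<and> p i \<le> 1) \<and> (\<Sum>i<N. p i) = 1"

definition weight_num :: "nat \<Rightarrow> nat \<Rightarrow> (nat \<Rightarrow> real) \<Rightarrow> nat \<Rightarrow> real" where
  "weight_num n N p i = (\<Sum>j<N. p j) / ((\<Sum>j<N. p j) - p i) * ((real N - 1) / real n)"

definition weight_diag :: "nat \<Rightarrow> nat \<Rightarrow> (nat \<Rightarrow> real) \<Rightarrow> nat set \<Rightarrow> 'a::{conjugatable_field, real_algebra_1} mat" where
  "weight_diag n N p \<Lambda> = mat N N (\<lambda>(i, j). if i = j \<and> i \<in> \<Lambda> then of_real (weight_num n N p i) else 0)"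

text \<open>R_m^p(F,G); emb embeds the scalar field into the complex numbers so that the
  spectral radius (over C) can be taken.\<close>
definition R_mp :: "('a::{conjugatable_field, real_algebra_1} \<Rightarrow> complex) \<Rightarrow> nat \<Rightarrow> nat \<Rightarrow> (nat \<Rightarrow> real) \<Rightarrow> nat
     \<Rightarrow> (nat \<Rightarrow> 'a vec) \<Rightarrow> (nat \<Rightarrow> 'a vec) \<Rightarrow> real" where
  "R_mp emb n N p m f g = Max {spectral_radius (map_mat emb
        (synthesis_op n N g * weight_diag n N p \<Lambda> * analysis_op n N f)) | \<Lambda>.
        \<Lambda> \<subseteq> {..<N} \<and> card \<Lambda> = m}"

end

theory Submission
  imports Defs
begin

text \<open>For \<open>\<Lambda> = {i}\<close> the operator \<open>\<Theta>\<^sub>G\<^sup>* D \<Theta>\<^sub>F\<close> is the rank-one map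
  \<open>x \<mapsto> q\<^sub>i \<langle>x, f\<^sub>i\<rangle> g\<^sub>i\<close>. A rank-one matrix \<open>u w\<^sup>T\<close> has spectrum contained in \<open>{0, w\<^sup>T u}\<close>, and \<open>w\<^sup>T u\<close> is an
  eigenvalue (with eigenvector \<open>u\<close>) whenever it is nonzero, so its spectral radius is \<open>|w\<^sup>T u|\<close>;
  here this is \<open>q\<^sub>i |\<langle>g\<^sub>i, f\<^sub>i\<rangle>| = q\<^sub>i |\<langle>f\<^sub>i, g\<^sub>i\<rangle>|\<close>.
  The real case reduces to the complex one, since complexifying the frames commutes with the
  operators involved.\<close>

definition outer_prod :: "'a::comm_ring_1 vec \<Rightarrow> 'a vec \<Rightarrow> 'a mat" where
  "outer_prod u w = mat (dim_vec u) (dim_vec w) (\<lambda>(r, s). u $ r * w $ s)"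

lemma dim_outer_prod [simp]:
  "dim_row (outer_prod u w) = dim_vec u" "dim_col (outer_prod u w) = dim_vec w"
  by (simp_all add: outer_prod_def)

lemma outer_prod_mult_vec:
  assumes "dim_vec v = dim_vec w"
  shows "outer_prod u w *\<^sub>v v = (w \<bullet> v) \<cdot>\<^sub>v u"
  using assms
  by (intro eq_vecI) (auto simp: outer_prod_def scalar_prod_def sum_distrib_left mult_ac)

lemma spectrum_outer_prod_subset:
  fixes u w :: "'a::field vec"
  assumes u: "u \<in> carrier_vec n" and w: "w \<in> carrier_vec n"
  shows "spectrum (outer_prod u w) \<subseteq> {0, w \<bullet> u}"
proof
  fix l assume "l \<in> spectrum (outer_prod u w)"
  then obtain v where v: "v \<in> carrier_vec n" "v \<noteq> 0\<^sub>v n" and eigen: "(w \<bullet> v) \<cdot>\<^sub>v u = l \<cdot>\<^sub>v v"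
    using u w by (auto simp: spectrum_def eigenvalue_def eigenvector_def outer_prod_mult_vec)
  show "l \<in> {0, w \<bullet> u}"
  proof (cases "l = 0")
    case False
    have v_eq: "v = (w \<bullet> v / l) \<cdot>\<^sub>v u"
      using arg_cong[OF eigen, of "\<lambda>x. inverse l \<cdot>\<^sub>v x"] False v(1)
      by (simp add: smult_smult_assoc field_simps)
    have "w \<bullet> v \<noteq> 0"
      using v_eq v by auto
    moreover have "w \<bullet> v = (w \<bullet> v / l) * (w \<bullet> u)"
      using arg_cong[OF v_eq, of "\<lambda>x. w \<bullet> x"] u w by simp
    ultimately show ?thesis
      using False by (simp add: field_simps)
  qed simp
qed

lemma eigenvalue_outer_prod:
  fixes u w :: "'a::field vec"
  assumes u: "u \<in> carrier_vec n" and w: "w \<in> carrier_vec n" and nonzero: "w \<bullet> u \<noteq> 0"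
  shows "eigenvalue (outer_prod u w) (w \<bullet> u)"
proof -
  have "u \<noteq> 0\<^sub>v n"
    using nonzero w by auto
  then show ?thesis
    using u w by (auto simp: eigenvalue_def eigenvector_def outer_prod_mult_vec)
qed

lemma spectral_radius_outer_prod:
  assumes "0 < n" and u: "u \<in> carrier_vec n" and w: "w \<in> carrier_vec n"
  shows "spectral_radius (outer_prod u w) = cmod (w \<bullet> u)"
proof -
  have M: "outer_prod u w \<in> carrier_mat n n"
    using u w by (simp add: carrier_matI)
  have "spectral_radius (outer_prod u w) \<in> {0, cmod (w \<bullet> u)}"
    using spectral_radius_mem_max(1)[OF M \<open>0 < n\<close>] spectrum_outer_prod_subset[OF u w] by auto
  moreover have "cmod (w \<bullet> u) \<le> spectral_radius (outer_prod u w)" if "w \<bullet> u \<noteq> 0"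
    using spectral_radius_mem_max(2)[OF M \<open>0 < n\<close>] eigenvalue_outer_prod[OF u w that]
    by (simp add: spectrum_def)
  ultimately show ?thesis
    by force
qed

lemma synthesis_op_carrier [simp]: "synthesis_op n N f \<in> carrier_mat n N"
  by (simp add: synthesis_op_def)

lemma analysis_op_carrier [simp]: "analysis_op n N f \<in> carrier_mat N n"
  by (simp add: analysis_op_def)

lemma weight_diag_carrier [simp]: "weight_diag n N p \<Lambda> \<in> carrier_mat N N"
  by (simp add: weight_diag_def)

lemma map_mat_ident: "map_mat (\<lambda>x. x) A = A"
  by (rule eq_matI) auto

lemma synthesis_weight_analysis_singleton:
  fixes f g :: "nat \<Rightarrow> 'a::{conjugatable_field, real_algebra_1} vec"
  assumes i: "i < N" and f: "f i \<in> carrier_vec n" and g: "g i \<in> carrier_vec n"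
  shows "synthesis_op n N g * weight_diag n N p {i} * analysis_op n N f
    = outer_prod (of_real (weight_num n N p i) \<cdot>\<^sub>v g i) (conjugate (f i))"
proof -
  let ?q = "of_real (weight_num n N p i) :: 'a"
  have "synthesis_op n N g * weight_diag n N p {i} = mat n N (\<lambda>(r, k). if k = i then ?q * g i $ r else 0)"
    using i by (intro eq_matI)
      (auto simp: synthesis_op_def weight_diag_def scalar_prod_def if_distrib[of "\<lambda>x. _ * x"]
        sum.delta' mult.commute cong: if_cong)
  then show ?thesis
    using i f g by (intro eq_matI)
      (auto simp: outer_prod_def analysis_op_def scalar_prod_def if_distrib[of "\<lambda>x. x * _"]
        sum.delta' cong: if_cong)
qed

lemma spectral_radius_singleton_operator:
  fixes f g :: "nat \<Rightarrow> complex vec"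
  assumes "0 < n" and i: "i < N" and f: "f i \<in> carrier_vec n" and g: "g i \<in> carrier_vec n"
  shows "spectral_radius (synthesis_op n N g * weight_diag n N p {i} * analysis_op n N f)
    = \<bar>weight_num n N p i\<bar> * cmod (f i \<bullet>c g i)"
proof -
  have "conjugate (f i) \<bullet> g i = cnj (f i \<bullet>c g i)"
    using conjugate_sprod_vec[OF f carrier_vec_conjugate[OF g]] by simp
  then show ?thesis
    using f g
    by (simp add: synthesis_weight_analysis_singleton[where f = f and g = g and n = n and N = N, OF i f g]
        spectral_radius_outer_prod[OF \<open>0 < n\<close>] norm_mult)
qed

lemma R_mp_1_complex:
  fixes f g :: "nat \<Rightarrow> complex vec"
  assumes "0 < n" and f: "\<forall>i<N. f i \<in> carrier_vec n" and g: "\<forall>i<N. g i \<in> carrier_vec n"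
  shows "R_mp (\<lambda>z. z) n N p 1 f g = Max {\<bar>weight_num n N p i\<bar> * cmod (f i \<bullet>c g i) | i. i < N}"
proof -
  let ?\<rho> = "\<lambda>\<Lambda>. spectral_radius (synthesis_op n N g * weight_diag n N p \<Lambda> * analysis_op n N f)"
  have "{?\<rho> \<Lambda> | \<Lambda>. \<Lambda> \<subseteq> {..<N} \<and> card \<Lambda> = 1} = {?\<rho> {i} | i. i < N}"
    by (auto simp: card_1_singleton_iff)
  also have "\<dots> = {\<bar>weight_num n N p i\<bar> * cmod (f i \<bullet>c g i) | i. i < N}"
    by (intro Collect_cong ex_cong1) (use f g in \<open>auto simp: spectral_radius_singleton_operator[OF \<open>0 < n\<close>]\<close>)
  finally show ?thesis
    by (simp add: R_mp_def map_mat_ident)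
qed

lemma map_mat_of_real_synthesis_op:
  assumes "\<forall>i<N. f i \<in> carrier_vec n"
  shows "map_mat complex_of_real (synthesis_op n N f) = synthesis_op n N (\<lambda>i. map_vec of_real (f i))"
  using assms by (intro eq_matI) (auto simp: synthesis_op_def)

lemma map_mat_of_real_analysis_op:
  assumes "\<forall>i<N. f i \<in> carrier_vec n"
  shows "map_mat complex_of_real (analysis_op n N f) = analysis_op n N (\<lambda>i. map_vec of_real (f i))"
  using assms by (intro eq_matI) (auto simp: analysis_op_def)

lemma map_mat_of_real_weight_diag:
  "map_mat complex_of_real (weight_diag n N p \<Lambda>) = weight_diag n N p \<Lambda>"
  by (intro eq_matI) (auto simp: weight_diag_def)

lemma R_mp_of_real:
  assumes f: "\<forall>i<N. f i \<in> carrier_vec n" and g: "\<forall>i<N. g i \<in> carrier_vec n"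
  shows "R_mp complex_of_real n N p m f g
    = R_mp (\<lambda>z. z) n N p m (\<lambda>i. map_vec of_real (f i)) (\<lambda>i. map_vec of_real (g i))"
proof -
  have "map_mat complex_of_real (synthesis_op n N g * weight_diag n N p \<Lambda> * analysis_op n N f)
    = synthesis_op n N (\<lambda>i. map_vec of_real (g i)) * weight_diag n N p \<Lambda>
        * analysis_op n N (\<lambda>i. map_vec of_real (f i))" for \<Lambda>
  proof -
    have "synthesis_op n N g * weight_diag n N p \<Lambda> \<in> carrier_mat n N"
      by (rule mult_carrier_mat[of _ n N]) simp_all
    then show ?thesis
      by (simp add: of_real_hom.mat_hom_mult[of _ n N _ n] of_real_hom.mat_hom_mult[of _ n N _ N]
          map_mat_of_real_synthesis_op[OF g] map_mat_of_real_analysis_op[OF f] map_mat_of_real_weight_diag)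
  qed
  then show ?thesis
    by (simp add: R_mp_def map_mat_ident)
qed

lemma cscalar_prod_of_real:
  fixes v w :: "real vec"
  assumes "v \<in> carrier_vec n" and "w \<in> carrier_vec n"
  shows "map_vec complex_of_real v \<bullet>c map_vec complex_of_real w = of_real (v \<bullet>c w)"
  using assms by (simp add: scalar_prod_def)

lemma R_mp_1_of_real:
  fixes f g :: "nat \<Rightarrow> real vec"
  assumes "0 < n" and f: "\<forall>i<N. f i \<in> carrier_vec n" and g: "\<forall>i<N. g i \<in> carrier_vec n"
  shows "R_mp complex_of_real n N p 1 f g = Max {\<bar>weight_num n N p i\<bar> * \<bar>f i \<bullet>c g i\<bar> | i. i < N}"
proof -
  have "R_mp complex_of_real n N p 1 f g
      = Max {\<bar>weight_num n N p i\<bar> * cmod (map_vec of_real (f i) \<bullet>c map_vec of_real (g i)) | i. i < N}"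
    unfolding R_mp_of_real[OF f g] using f g by (intro R_mp_1_complex[OF \<open>0 < n\<close>]) simp_all
  also have "\<dots> = Max {\<bar>weight_num n N p i\<bar> * \<bar>f i \<bullet>c g i\<bar> | i. i < N}"
    by (intro arg_cong[where f = Max] Collect_cong ex_cong1) (use f g in \<open>auto simp: cscalar_prod_of_real\<close>)
  finally show ?thesis .
qed

lemma weight_num_nonneg:
  assumes "is_prob_seq N p" and "i < N"
  shows "0 \<le> weight_num n N p i"
proof -
  have "(\<Sum>j<N. p j) = 1" and "p i \<le> 1" and "1 \<le> real N"
    using assms by (auto simp: is_prob_seq_def)
  then show ?thesis
    by (simp add: weight_num_def)
qed

lemma frame_carrier: "is_frame n N f \<Longrightarrow> \<forall>i<N. f i \<in> carrier_vec n"
  by (simp add: is_frame_def)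

lemma dual_frame_carrier: "is_dual_frame n N f g \<Longrightarrow> \<forall>i<N. g i \<in> carrier_vec n"
  by (simp add: is_dual_frame_def is_frame_def)

theorem proposition3p1:
  fixes n N :: nat and p :: "nat \<Rightarrow> real"
  assumes "0 < n" and "n \<le> N"
    and "is_prob_seq N p"
    and "\<forall>i<N. (\<Sum>j<N. p j) - p i \<noteq> 0"
  shows "(\<forall>(f :: nat \<Rightarrow> real vec) g. is_frame n N f \<longrightarrow> is_dual_frame n N f g \<longrightarrow>
            R_mp complex_of_real n N p 1 f g
              = Max {weight_num n N p i * norm (f i \<bullet>c g i) | i. i < N})
       \<and> (\<forall>(f :: nat \<Rightarrow> complex vec) g. is_frame n N f \<longrightarrow> is_dual_frame n N f g \<longrightarrow>
            R_mp (\<lambda>z. z) n N p 1 f g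
              = Max {weight_num n N p i * norm (f i \<bullet>c g i) | i. i < N})"
proof -
  have weights: "{\<bar>weight_num n N p i\<bar> * x i | i. i < N} = {weight_num n N p i * x i | i. i < N}"
    for x :: "nat \<Rightarrow> real"
    using weight_num_nonneg[OF assms(3)] by (metis abs_of_nonneg)
  show ?thesis
  proof (intro conjI allI impI)
    fix f g :: "nat \<Rightarrow> real vec"
    assume "is_frame n N f" and "is_dual_frame n N f g"
    then show "R_mp complex_of_real n N p 1 f g = Max {weight_num n N p i * norm (f i \<bullet>c g i) | i. i < N}"
      using R_mp_1_of_real[OF assms(1) frame_carrier dual_frame_carrier] weights by simp
  next
    fix f g :: "nat \<Rightarrow> complex vec"
    assume "is_frame n N f" and "is_dual_frame n N f g"
    then show "R_mp (\<lambda>z. z) n N p 1 f g = Max {weight_num n N p i * norm (f i \<bullet>c g i) | i. i < N}"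
      using R_mp_1_complex[OF assms(1) frame_carrier dual_frame_carrier] weights by simp
  qed
qed

end
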